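(* Let $t=B(r,t_1,\dots,t_k)$ be a rooted tree with vertex set $I$, $k\geq1$. Then the interval $[\widehat{0},t]$ in $\Pi_{\operatorname{NAP}}(I)$ is isomorphic to the product over $j\in\{1,\dots,k\}$ of the posets $[\widehat{0},B(r,t_j)]$ (each taken in $\Pi_{\operatorname{NAP}}$ of the vertex set of $B(r,t_j)$).
   Context: $B(r,t_1,\dots,t_k)$ denotes the rooted tree obtained from rooted trees $t_1,\dots,t_k$ on disjoint vertex sets by adding a new vertex $r$, which becomes the root, and an edge from $r$ to the root of each $t_i$. $\Pi_{\operatorname{NAP}}(I)$ is the set of forests of rooted trees whose vertex set is exactly $I$, partially ordered as follows: $y$ covers $x$ iff $y$ is obtained from $x$ by adding an edge from the root of one component of $x$ to the root of another component (the latter root remaining the root); $\leq$ is the reflexive–transitive closure. $\widehat{0}$ is the forest of one-vertex trees. *)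

theory Defs
  imports "HOL-Library.FuncSet"
begin

text \<open>A forest of rooted trees on vertex set V is represented by its set of
  edges E, each edge (p, c) going from a parent p to a child c.\<close>

definition rooted_forest :: "'a set \<Rightarrow> 'a rel \<Rightarrow> bool" where
  "rooted_forest V E \<longleftrightarrow> finite V \<and> E \<subseteq> V \<times> V
     \<and> (\<forall>a b v. (a, v) \<in> E \<longrightarrow> (b, v) \<in> E \<longrightarrow> a = b)
     \<and> (\<forall>v. (v, v) \<notin> E\<^sup>+)"

definition roots :: "'a set \<Rightarrow> 'a rel \<Rightarrow> 'a set" where
  "roots V E = {v \<in> V. \<forall>u. (u, v) \<notin> E}"

definition rooted_tree :: "'a set \<Rightarrow> 'a rel \<Rightarrow> bool" where
  "rooted_tree V E \<longleftrightarrow> rooted_forest V E \<and> card (roots V E) = 1"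

definition tree_root :: "'a set \<Rightarrow> 'a rel \<Rightarrow> 'a" where
  "tree_root V E = (THE v. v \<in> roots V E)"

text \<open>B(r, t_j : j \<in> J): new root r joined to the roots of the trees (V j, E j).\<close>

definition graft_vertices :: "'a \<Rightarrow> ('i \<Rightarrow> 'a set) \<Rightarrow> 'i set \<Rightarrow> 'a set" where
  "graft_vertices r V J = insert r (\<Union>j\<in>J. V j)"

definition graft_edges :: "'a \<Rightarrow> ('i \<Rightarrow> 'a set) \<Rightarrow> ('i \<Rightarrow> 'a rel) \<Rightarrow> 'i set \<Rightarrow> 'a rel" where
  "graft_edges r V E J = (\<Union>j\<in>J. E j) \<union> (\<lambda>j. (r, tree_root (V j) (E j))) ` J"

text \<open>Covering relation of Pi_NAP(V): add an edge between the roots of two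
  distinct components.\<close>

definition nap_cover :: "'a set \<Rightarrow> 'a rel \<Rightarrow> 'a rel \<Rightarrow> bool" where
  "nap_cover V x y \<longleftrightarrow> rooted_forest V x \<and>
     (\<exists>a b. a \<in> roots V x \<and> b \<in> roots V x \<and> a \<noteq> b \<and> y = insert (a, b) x)"

definition nap_le :: "'a set \<Rightarrow> 'a rel \<Rightarrow> 'a rel \<Rightarrow> bool" where
  "nap_le V x y \<longleftrightarrow> rooted_forest V x \<and> rooted_forest V y \<and> (nap_cover V)\<^sup>*\<^sup>* x y"

definition nap_interval :: "'a set \<Rightarrow> 'a rel \<Rightarrow> 'a rel set" where
  "nap_interval V t = {x. nap_le V {} x \<and> nap_le V x t}"

definition poset_iso :: "'b set \<Rightarrow> ('b \<Rightarrow> 'b \<Rightarrow> bool) \<Rightarrow> 'c set \<Rightarrow> ('c \<Rightarrow> 'c \<Rightarrow> bool) \<Rightarrow> bool" where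
  "poset_iso A leA B leB \<longleftrightarrow> (\<exists>f. bij_betw f A B \<and>
     (\<forall>x\<in>A. \<forall>y\<in>A. leA x y \<longleftrightarrow> leB (f x) (f y)))"

end

theory Submission
  imports Defs "HOL-Library.Disjoint_Sets"
begin

text \<open>In Pi_NAP(V) a forest x lies below y exactly when x \<subseteq> y and every edge of y missing
  from x leaves a root of x; the missing edges can then be added one at a time. So [0, t]
  consists of the subforests of t with this property. The edges of B(r, t_1, ..., t_k) are the
  disjoint union of the edge sets of the B(r, t_j), and the edge entering the source of any
  edge lies in the same piece as that edge. Hence the property holds for x iff it holds for
  every x \<inter> B(r, t_j), and x \<mapsto> (x \<inter> B(r, t_j))_j is the isomorphism.\<close>

definition nap_extends :: "'a rel \<Rightarrow> 'a rel \<Rightarrow> bool" where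
  "nap_extends x y \<longleftrightarrow> x \<subseteq> y \<and> (\<forall>p c u. (p, c) \<in> y - x \<longrightarrow> (u, p) \<notin> x)"

lemma rooted_forest_subset:
  assumes "rooted_forest V y" "x \<subseteq> y"
  shows "rooted_forest V x"
  using assms trancl_mono unfolding rooted_forest_def by blast

lemma rtranclp_nap_cover_imp_nap_extends:
  "(nap_cover V)\<^sup>*\<^sup>* x y \<Longrightarrow> nap_extends x y"
proof (induction rule: rtranclp_induct)
  case base
  then show ?case by (simp add: nap_extends_def)
next
  case (step y z)
  then obtain a b where "a \<in> roots V y" "z = insert (a, b) y"
    unfolding nap_cover_def by blast
  with step.IH show ?case
    unfolding nap_extends_def roots_def by blast
qed

lemma nap_extends_step:
  assumes y: "rooted_forest V y" and xy: "nap_extends x y" "x \<noteq> y"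
  obtains x' where "nap_cover V x x'" "nap_extends x' y" "card (y - x') < card (y - x)"
proof -
  have "finite y" "acyclic y" "y \<subseteq> V \<times> V"
    using y finite_subset unfolding rooted_forest_def acyclic_def by blast+
  then have "wf (y\<inverse>)"
    by (simp add: finite_acyclic_wf acyclic_converse)
  moreover have "snd ` (y - x) \<noteq> {}"
    using xy unfolding nap_extends_def by blast
  \<comment> \<open>Add a new edge whose child is not the parent of another new edge; otherwise adding
      it would make that parent a non-root.\<close>
  ultimately obtain c where c: "c \<in> snd ` (y - x)"
    and c_min: "\<And>z. (c, z) \<in> y \<Longrightarrow> z \<notin> snd ` (y - x)"
    unfolding wf_eq_minimal by (metis converse_iff ex_in_conv)
  then obtain p where pc: "(p, c) \<in> y - x" by force
  define x' where "x' = insert (p, c) x"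
  have "rooted_forest V x"
    using rooted_forest_subset y xy unfolding nap_extends_def by blast
  moreover have "p \<in> roots V x" "c \<in> roots V x" "p \<noteq> c"
  proof -
    have "\<forall>a b v. (a, v) \<in> y \<longrightarrow> (b, v) \<in> y \<longrightarrow> a = b" "(p, p) \<notin> y\<^sup>+"
      using y unfolding rooted_forest_def by blast+
    then show "p \<in> roots V x" "c \<in> roots V x" "p \<noteq> c"
      using pc xy \<open>y \<subseteq> V \<times> V\<close> unfolding nap_extends_def roots_def
      by (blast dest: r_into_trancl)+
  qed
  ultimately have "nap_cover V x x'"
    unfolding nap_cover_def x'_def by blast
  moreover have "nap_extends x' y"
  proof -
    have "(c, c') \<notin> y - x" for c'
      using c_min by force
    then show ?thesis
      using xy pc unfolding nap_extends_def x'_def by blast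
  qed
  moreover have "card (y - x') < card (y - x)"
    using pc \<open>finite y\<close> unfolding x'_def by (intro psubset_card_mono) auto
  ultimately show thesis by (rule that)
qed

lemma nap_extends_imp_rtranclp_nap_cover:
  assumes "rooted_forest V y" "nap_extends x y"
  shows "(nap_cover V)\<^sup>*\<^sup>* x y"
  using assms(2)
proof (induction "card (y - x)" arbitrary: x rule: less_induct)
  case less
  show ?case
  proof (cases "x = y")
    case False
    then obtain x' where "nap_cover V x x'" "nap_extends x' y" "card (y - x') < card (y - x)"
      using nap_extends_step assms(1) less.prems by blast
    then show ?thesis
      using less.hyps by (meson converse_rtranclp_into_rtranclp)
  qed simp
qed

lemma nap_le_iff_nap_extends:
  assumes "rooted_forest V y"
  shows "nap_le V x y \<longleftrightarrow> nap_extends x y"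
proof
  assume "nap_extends x y"
  then show "nap_le V x y"
    using assms rooted_forest_subset nap_extends_imp_rtranclp_nap_cover
    unfolding nap_le_def nap_extends_def by blast
qed (auto simp: nap_le_def intro: rtranclp_nap_cover_imp_nap_extends)

lemma nap_interval_eq:
  assumes "rooted_forest V t"
  shows "nap_interval V t = {x \<in> Pow t. nap_extends x t}"
proof -
  have "nap_le V {} x" if "x \<subseteq> t" for x
    using rooted_forest_subset[OF assms that] nap_le_iff_nap_extends
    unfolding nap_extends_def by blast
  then show ?thesis
    unfolding nap_interval_def nap_le_iff_nap_extends[OF assms]
    by (auto simp: nap_extends_def)
qed

lemma nap_extends_decompose:
  assumes "x \<subseteq> \<Union>(P ` K)" "y \<subseteq> \<Union>(P ` K)"
    and local: "\<And>j p c u. j \<in> K \<Longrightarrow> (p, c) \<in> P j \<Longrightarrow> (u, p) \<in> \<Union>(P ` K) \<Longrightarrow> (u, p) \<in> P j"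
  shows "nap_extends x y \<longleftrightarrow> (\<forall>j\<in>K. nap_extends (x \<inter> P j) (y \<inter> P j))"
proof
  assume pieces: "\<forall>j\<in>K. nap_extends (x \<inter> P j) (y \<inter> P j)"
  have "(u, p) \<notin> x" if new: "(p, c) \<in> y - x" for p c u
  proof
    assume "(u, p) \<in> x"
    have "(p, c) \<in> \<Union>(P ` K)"
      using new assms(2) by (auto dest: subsetD)
    then obtain j where "j \<in> K" "(p, c) \<in> P j"
      by (rule UN_E)
    moreover have "(u, p) \<in> P j"
      using local[OF calculation] subsetD[OF assms(1) \<open>(u, p) \<in> x\<close>] .
    ultimately show False
      using pieces \<open>(u, p) \<in> x\<close> new unfolding nap_extends_def by blast
  qed
  moreover have "x \<subseteq> y"
  proof
    fix e assume "e \<in> x"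
    then obtain j where "j \<in> K" "e \<in> P j"
      using assms(1) by (auto dest: subsetD)
    then show "e \<in> y"
      using pieces \<open>e \<in> x\<close> unfolding nap_extends_def by blast
  qed
  ultimately show "nap_extends x y"
    unfolding nap_extends_def by blast
qed (unfold nap_extends_def, blast)

lemma bij_betw_restrict_Int_Pow:
  assumes "disjoint_family_on P K"
  shows "bij_betw (\<lambda>x. restrict (\<lambda>j. x \<inter> P j) K) (Pow (\<Union>(P ` K))) (PiE K (\<lambda>j. Pow (P j)))"
proof (rule bij_betw_byWitness[where f' = "\<lambda>F. \<Union>(F ` K)"])
  show "\<forall>F \<in> PiE K (\<lambda>j. Pow (P j)). restrict (\<lambda>j. \<Union>(F ` K) \<inter> P j) K = F"
  proof
    fix F assume F: "F \<in> PiE K (\<lambda>j. Pow (P j))"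
    have sub: "F i \<subseteq> P i" if "i \<in> K" for i
      using F that by (simp add: PiE_iff)
    have "F i \<inter> P j = {}" if "i \<in> K" "j \<in> K" "i \<noteq> j" for i j
      using assms sub[OF that(1)] that unfolding disjoint_family_on_def by blast
    then have "\<Union>(F ` K) \<inter> P j = F j" if "j \<in> K" for j
      using sub that by blast
    then show "restrict (\<lambda>j. \<Union>(F ` K) \<inter> P j) K = F"
      using PiE_arb[OF F] by (intro ext) simp
  qed
  show "\<forall>x \<in> Pow (\<Union>(P ` K)). \<Union>(restrict (\<lambda>j. x \<inter> P j) K ` K) = x"
    by auto
  show "(\<lambda>x. restrict (\<lambda>j. x \<inter> P j) K) ` Pow (\<Union>(P ` K)) \<subseteq> PiE K (\<lambda>j. Pow (P j))"
    by auto
  show "(\<lambda>F. \<Union>(F ` K)) ` PiE K (\<lambda>j. Pow (P j)) \<subseteq> Pow (\<Union>(P ` K))"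
    by (auto simp: PiE_iff)
qed

lemma poset_iso_nap_interval_PiE:
  assumes T: "rooted_forest V (\<Union>(P ` K))"
    and pieces: "\<And>j. j \<in> K \<Longrightarrow> rooted_forest (W j) (P j)"
    and disjoint: "disjoint_family_on P K"
    and local: "\<And>j p c u. j \<in> K \<Longrightarrow> (p, c) \<in> P j \<Longrightarrow> (u, p) \<in> \<Union>(P ` K) \<Longrightarrow> (u, p) \<in> P j"
  shows "poset_iso (nap_interval V (\<Union>(P ` K))) (nap_le V)
           (PiE K (\<lambda>j. nap_interval (W j) (P j))) (\<lambda>F G. \<forall>j\<in>K. nap_le (W j) (F j) (G j))"
proof -
  define f where "f x = restrict (\<lambda>j. x \<inter> P j) K" for x
  have extends_iff: "nap_extends x y \<longleftrightarrow> (\<forall>j\<in>K. nap_extends (f x j) (f y j))"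
    if "x \<subseteq> \<Union>(P ` K)" "y \<subseteq> \<Union>(P ` K)" for x y
    using nap_extends_decompose[OF that local] unfolding f_def by simp
  have "f (\<Union>(P ` K)) j = P j" if "j \<in> K" for j
    using that unfolding f_def by auto
  then have "bij_betw f {x \<in> Pow (\<Union>(P ` K)). nap_extends x (\<Union>(P ` K))}
      {F \<in> PiE K (\<lambda>j. Pow (P j)). \<forall>j\<in>K. nap_extends (F j) (P j)}"
    using bij_betw_restrict_Int_Pow[OF disjoint] extends_iff
    unfolding f_def[abs_def] by (intro bij_betw_Collect) auto
  moreover have "PiE K (\<lambda>j. nap_interval (W j) (P j))
      = {F \<in> PiE K (\<lambda>j. Pow (P j)). \<forall>j\<in>K. nap_extends (F j) (P j)}"
    using nap_interval_eq[OF pieces] unfolding PiE_def Pi_def by blast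
  moreover have "nap_le V x y \<longleftrightarrow> (\<forall>j\<in>K. nap_le (W j) (f x j) (f y j))"
    if "x \<subseteq> \<Union>(P ` K)" "y \<subseteq> \<Union>(P ` K)" for x y
  proof -
    have "rooted_forest (W j) (f y j)" if "j \<in> K" for j
      using rooted_forest_subset[OF pieces] that unfolding f_def by auto
    then show ?thesis
      using extends_iff[OF that] nap_le_iff_nap_extends rooted_forest_subset[OF T that(2)]
      by auto
  qed
  ultimately show ?thesis
    unfolding poset_iso_def nap_interval_eq[OF T] by auto
qed

lemma tree_root_in_roots:
  assumes "rooted_tree V E"
  shows "tree_root V E \<in> roots V E"
proof -
  obtain a where "roots V E = {a}"
    using assms unfolding rooted_tree_def by (meson card_1_singletonE)
  then show ?thesis
    unfolding tree_root_def by simp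
qed

lemma graft_edges_singleton:
  "graft_edges r V E {j} = insert (r, tree_root (V j) (E j)) (E j)"
  unfolding graft_edges_def by simp

lemma graft_edges_UN: "graft_edges r V E I = (\<Union>j\<in>I. graft_edges r V E {j})"
  unfolding graft_edges_def by blast

lemma graft_edgesE:
  assumes "(u, v) \<in> graft_edges r V E I"
  obtains j where "j \<in> I" "(u, v) \<in> graft_edges r V E {j}"
  using assms unfolding graft_edges_UN[of r V E I] by blast

locale graft =
  fixes r :: 'a and V :: "'i \<Rightarrow> 'a set" and E :: "'i \<Rightarrow> 'a rel" and J :: "'i set"
  assumes trees: "\<And>j. j \<in> J \<Longrightarrow> rooted_tree (V j) (E j)"
    and disjoint: "disjoint_family_on V J"
    and root_fresh: "\<And>j. j \<in> J \<Longrightarrow> r \<notin> V j"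
begin

abbreviation root :: "'i \<Rightarrow> 'a" where
  "root j \<equiv> tree_root (V j) (E j)"

abbreviation edges :: "'i set \<Rightarrow> 'a rel" where
  "edges I \<equiv> graft_edges r V E I"

lemma tree_edges_subset: "j \<in> J \<Longrightarrow> E j \<subseteq> V j \<times> V j"
  using trees unfolding rooted_tree_def rooted_forest_def by blast

lemma root_in_tree: "j \<in> J \<Longrightarrow> root j \<in> V j"
  and no_edge_into_root: "j \<in> J \<Longrightarrow> (u, root j) \<notin> E j"
  using tree_root_in_roots[OF trees] unfolding roots_def by blast+

lemma edges_singleton_cases:
  assumes "j \<in> J" "(u, v) \<in> edges {j}"
  obtains "u = r" "v = root j" | "u \<in> V j" "v \<in> V j" "(u, v) \<in> E j"
  using assms tree_edges_subset[OF assms(1)] unfolding graft_edges_singleton by blast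

lemma edges_singleton_target:
  assumes "j \<in> J" "(u, v) \<in> edges {j}"
  shows "v \<in> V j"
  by (rule edges_singleton_cases[OF assms]) (simp_all add: root_in_tree[OF assms(1)])

lemma no_edge_into_new_root:
  assumes "I \<subseteq> J"
  shows "(u, r) \<notin> edges I"
proof
  assume "(u, r) \<in> edges I"
  then obtain j where "j \<in> I" "(u, r) \<in> edges {j}"
    by (rule graft_edgesE)
  then show False
    using assms edges_singleton_target root_fresh by blast
qed

lemma edge_into_tree:
  assumes "I \<subseteq> J" "j \<in> I" "(u, v) \<in> edges I" "v \<in> V j"
  shows "(u, v) \<in> edges {j}"
proof -
  obtain i where i: "i \<in> I" "(u, v) \<in> edges {i}"
    using assms(3) by (rule graft_edgesE)
  then have "v \<in> V i"
    using assms(1) edges_singleton_target by blast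
  then have "i = j"
    using assms i disjoint unfolding disjoint_family_on_def by blast
  then show ?thesis
    using i by simp
qed

lemma edge_from_tree:
  assumes "I \<subseteq> J" "j \<in> I" "(u, v) \<in> edges I" "u \<in> V j"
  shows "(u, v) \<in> E j"
proof -
  obtain i where i: "i \<in> I" "(u, v) \<in> edges {i}"
    using assms(3) by (rule graft_edgesE)
  have "u \<noteq> r"
    using assms root_fresh by blast
  then have "u \<in> V i" "(u, v) \<in> E i"
    using i assms(1) by (auto elim: edges_singleton_cases)
  moreover have "i = j"
    using calculation assms i disjoint unfolding disjoint_family_on_def by blast
  ultimately show ?thesis
    by simp
qed

lemma disjoint_family_edges: "disjoint_family_on (\<lambda>j. edges {j}) J"
  unfolding disjoint_family_on_def
proof (intro ballI impI equals0I)
  fix m n e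
  assume "m \<in> J" "n \<in> J" "m \<noteq> n" and e: "e \<in> edges {m} \<inter> edges {n}"
  obtain u v where "e = (u, v)" by fastforce
  then have "v \<in> V m \<inter> V n"
    using e edges_singleton_target \<open>m \<in> J\<close> \<open>n \<in> J\<close> by blast
  then show False
    using disjoint \<open>m \<in> J\<close> \<open>n \<in> J\<close> \<open>m \<noteq> n\<close> unfolding disjoint_family_on_def by blast
qed

lemma edges_singleton_parent_unique:
  assumes "j \<in> J" "(a, v) \<in> edges {j}" "(b, v) \<in> edges {j}"
  shows "a = b"
proof -
  have "\<forall>a b v. (a, v) \<in> E j \<longrightarrow> (b, v) \<in> E j \<longrightarrow> a = b"
    using trees[OF assms(1)] unfolding rooted_tree_def rooted_forest_def by blast
  then show ?thesis
    using assms no_edge_into_root[OF assms(1)] unfolding graft_edges_singleton by blast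
qed

lemma trancl_edges:
  assumes "I \<subseteq> J" "(u, v) \<in> (edges I)\<^sup>+"
  shows "u = r \<or> (\<exists>j\<in>I. (u, v) \<in> (E j)\<^sup>+)"
  using assms(2)
proof (induction rule: trancl_induct)
  case (base v)
  then obtain j where "j \<in> I" "(u, v) \<in> edges {j}"
    by (rule graft_edgesE)
  then show ?case
    unfolding graft_edges_singleton by blast
next
  case (step v w)
  show ?case
  proof (cases "u = r")
    case False
    then obtain j where j: "j \<in> I" "(u, v) \<in> (E j)\<^sup>+"
      using step.IH by blast
    have "(E j)\<^sup>+ \<subseteq> V j \<times> V j"
      using assms(1) j(1) by (intro trancl_subset_Sigma tree_edges_subset) auto
    then have "v \<in> V j"
      using j(2) by (meson mem_Sigma_iff subsetD)
    then have "(v, w) \<in> E j"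
      by (rule edge_from_tree[OF assms(1) j(1) step.hyps(2)])
    then show ?thesis
      using j by (meson trancl_into_trancl)
  qed simp
qed

lemma rooted_forest_edges:
  assumes "I \<subseteq> J" "finite I"
  shows "rooted_forest (graft_vertices r V I) (edges I)"
  unfolding rooted_forest_def
proof (intro conjI allI impI)
  have "finite (V j)" if "j \<in> I" for j
    using that assms(1) trees unfolding rooted_tree_def rooted_forest_def by blast
  then show "finite (graft_vertices r V I)"
    using assms(2) unfolding graft_vertices_def by simp
  show "edges I \<subseteq> graft_vertices r V I \<times> graft_vertices r V I"
  proof
    fix e assume "e \<in> edges I"
    moreover obtain u v where e: "e = (u, v)" by fastforce
    ultimately obtain j where j: "j \<in> I" "(u, v) \<in> edges {j}"
      by (auto elim: graft_edgesE)
    then have "j \<in> J"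
      using assms(1) by blast
    then have "u \<in> insert r (V j)" "v \<in> V j"
      using j(2) edges_singleton_target by (auto elim: edges_singleton_cases)
    then show "e \<in> graft_vertices r V I \<times> graft_vertices r V I"
      using j(1) e unfolding graft_vertices_def by blast
  qed
next
  fix a b v assume a: "(a, v) \<in> edges I" and b: "(b, v) \<in> edges I"
  obtain j where "j \<in> I" "(a, v) \<in> edges {j}"
    using a by (rule graft_edgesE)
  then have "v \<in> V j" "j \<in> J"
    using assms(1) edges_singleton_target by blast+
  then show "a = b"
    using edge_into_tree[OF assms(1) \<open>j \<in> I\<close>] a b edges_singleton_parent_unique by blast
next
  fix v
  show "(v, v) \<notin> (edges I)\<^sup>+"
  proof
    assume cycle: "(v, v) \<in> (edges I)\<^sup>+"
    then have "v \<noteq> r"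
      using no_edge_into_new_root[OF assms(1)] by (auto dest: tranclD2)
    then obtain j where "j \<in> I" "(v, v) \<in> (E j)\<^sup>+"
      using trancl_edges[OF assms(1) cycle] by blast
    then show False
      using assms(1) trees unfolding rooted_tree_def rooted_forest_def by blast
  qed
qed

lemma edges_local:
  assumes "j \<in> J" "(p, c) \<in> edges {j}" "(u, p) \<in> edges J"
  shows "(u, p) \<in> edges {j}"
proof -
  have "p \<noteq> r"
    using assms(3) no_edge_into_new_root by blast
  then have "p \<in> V j"
    using assms(1,2) by (auto elim: edges_singleton_cases)
  then show ?thesis
    using edge_into_tree assms by blast
qed

lemma poset_iso_graft:
  assumes "finite J"
  shows "poset_iso (nap_interval (graft_vertices r V J) (edges J)) (nap_le (graft_vertices r V J))
           (PiE J (\<lambda>j. nap_interval (graft_vertices r V {j}) (edges {j})))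
           (\<lambda>F G. \<forall>j\<in>J. nap_le (graft_vertices r V {j}) (F j) (G j))"
proof -
  have union: "edges J = (\<Union>j\<in>J. edges {j})"
    by (rule graft_edges_UN)
  show ?thesis
    unfolding union
  proof (rule poset_iso_nap_interval_PiE[OF _ _ disjoint_family_edges])
    show "rooted_forest (graft_vertices r V J) (\<Union>j\<in>J. edges {j})"
      using rooted_forest_edges[OF order_refl assms] unfolding union .
    show "rooted_forest (graft_vertices r V {j}) (edges {j})" if "j \<in> J" for j
      using rooted_forest_edges that by simp
    show "(u, p) \<in> edges {j}"
      if "j \<in> J" "(p, c) \<in> edges {j}" "(u, p) \<in> (\<Union>j\<in>J. edges {j})" for j p c u
      using edges_local[OF that(1,2) that(3)[folded union]] .
  qed
qed

end

theorem proposition6p7: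
  fixes r :: 'a and k :: nat and V :: "nat \<Rightarrow> 'a set" and E :: "nat \<Rightarrow> 'a rel"
  assumes "k \<ge> 1"
    and "\<forall>j\<in>{1..k}. rooted_tree (V j) (E j)"
    and "\<forall>i\<in>{1..k}. \<forall>j\<in>{1..k}. i \<noteq> j \<longrightarrow> V i \<inter> V j = {}"
    and "\<forall>j\<in>{1..k}. r \<notin> V j"
  shows "poset_iso
           (nap_interval (graft_vertices r V {1..k}) (graft_edges r V E {1..k}))
           (nap_le (graft_vertices r V {1..k}))
           (PiE {1..k} (\<lambda>j. nap_interval (graft_vertices r V {j}) (graft_edges r V E {j})))
           (\<lambda>F G. \<forall>j\<in>{1..k}. nap_le (graft_vertices r V {j}) (F j) (G j))"
proof -
  interpret graft r V E "{1..k}"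
  proof
    show "rooted_tree (V j) (E j)" if "j \<in> {1..k}" for j
      using assms(2) that by blast
    show "disjoint_family_on V {1..k}"
      using assms(3) unfolding disjoint_family_on_def by blast
    show "r \<notin> V j" if "j \<in> {1..k}" for j
      using assms(4) that by blast
  qed
  show ?thesis
    using poset_iso_graft by simp
qed

end
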